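(* Assume Assumptions A, B and C hold (with constants $L_\phi,G,V>0$), and let $w^{(t)}$, $0\le t\le T$, be generated by Algorithm 1, where $T=\beta/\varepsilon$ for a constant $\beta>0$ (assumed to be an integer). Let $\eta^{(t)}=D\sqrt{\varepsilon}$ for some $D>0$, and let the learning rates be $\alpha_i^{(t)}=(1+\varepsilon)^t\alpha_i^{(0)}$ with $\alpha_i^{(0)}=\frac{\alpha}{e^{\beta}L_\phi}$ for some $\alpha\in(0,\tfrac13)$. Then $$\frac1T\sum_{t=0}^{T-1}[F(w^{(t)})-F_*]\le \frac{e^{\beta}L_\phi(1+\varepsilon)}{2(1-3\alpha)\alpha\beta}\cdot\frac1n\sum_{i=1}^n\|h(w^{(0)};i)-h_i^*\|^2\cdot\varepsilon+\frac{e^{\beta}L_\phi(3\varepsilon+2)}{8\alpha(1-3\alpha)}\Big[c\big(4+(V+2)GD^2\big)^2+8+4V\Big]\cdot\varepsilon.$$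
   Context: Let $n,c,d$ be positive integers and $[n]=\{1,\dots,n\}$. For each $i\in[n]$ let $h(\cdot;i):\mathbb{R}^d\to\mathbb{R}^c$ (components $h_j(\cdot;i)$, $j\in[c]$) and $\phi_i:\mathbb{R}^c\to\mathbb{R}$. Put $f(w;i)=\phi_i(h(w;i))$, $F(w)=\frac1n\sum_{i=1}^n f(w;i)$ and $F_*=\inf_{w\in\mathbb{R}^d}F(w)$. Each $\phi_i$ is assumed to attain its minimum, and $h_i^*\in\arg\min_{z}\phi_i(z)$. Vector norms are Euclidean; matrix norms are operator (spectral) norms. Assumption A: each $\phi_i$ is convex, bounded below, and $L_\phi$-smooth, i.e. $\|\nabla\phi_i(z_1)-\nabla\phi_i(z_2)\|\le L_\phi\|z_1-z_2\|$ for all $z_1,z_2$. Assumption B: each $h(\cdot;i)$ is twice continuously differentiable and there is $G>0$ with $\|\nabla_w^2 h_j(w;i)\|\le G$ for all $w\in\mathbb{R}^d$, $i\in[n]$, $j\in[c]$. Iteration setup: given a tolerance $\varepsilon>0$, step sizes $\eta^{(t)}>0$, learning rates $\alpha_i^{(t)}>0$ and iterates $w^{(t)}$, let $H_i^{(t)}\in\mathbb{R}^{c\times d}$ be the Jacobian of $h(\cdot;i)$ at $w^{(t)}$, let $\Phi^{(t)}(v)=\frac{1}{2n}\sum_{i=1}^n\|\eta^{(t)}H_i^{(t)}v-\alpha_i^{(t)}\nabla\phi_i(h(w^{(t)};i))\|^2$, $\Psi^{(t)}(v)=\Phi^{(t)}(v)+\frac{\varepsilon^2}{2}\|v\|^2$,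 and let $v_{*\mathrm{reg}}^{(t)}$ be the unique minimizer of $\Psi^{(t)}$ over $\mathbb{R}^d$. Algorithm 1: choose $w^{(0)}\in\mathbb{R}^d$; for $t=0,\dots,T-1$ set $v^{(t)}=v_{*\mathrm{reg}}^{(t)}$ and $w^{(t+1)}=w^{(t)}-\eta^{(t)}v^{(t)}$. Assumption C (constant $V>0$): for each $0\le t<T$ there exists $\hat v^{(t)}\in\mathbb{R}^d$ with $\|\hat v^{(t)}\|^2\le V$ and $\Phi^{(t)}(\hat v^{(t)})\le\varepsilon^2$. *)

theory Defs
  imports "HOL-Analysis.Analysis"
begin

text \<open>Assumption B for a single scalar component f = h_j(.;i):
  f is twice continuously differentiable (gradient g, Hessian matrix Hs, continuous),
  and the operator (spectral) norm of the Hessian is at most G everywhere.\<close>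
definition C2_hessian_bounded :: "(real^'d \<Rightarrow> real) \<Rightarrow> real \<Rightarrow> bool" where
  "C2_hessian_bounded f G \<longleftrightarrow>
     (\<exists>(g :: real^'d \<Rightarrow> real^'d) (Hs :: real^'d \<Rightarrow> real^'d^'d).
        (\<forall>w. (f has_derivative (\<lambda>v. g w \<bullet> v)) (at w)) \<and>
        (\<forall>w. (g has_derivative (\<lambda>v. Hs w *v v)) (at w)) \<and>
        continuous_on UNIV Hs \<and>
        (\<forall>w. onorm (\<lambda>v. Hs w *v v) \<le> G))"

definition Phi ::
  "nat \<Rightarrow> (nat \<Rightarrow> real^'d \<Rightarrow> real^'c) \<Rightarrow> (nat \<Rightarrow> real^'d \<Rightarrow> real^'d^'c)
   \<Rightarrow> (nat \<Rightarrow> real^'c \<Rightarrow> real^'c) \<Rightarrow> real^'d \<Rightarrow> real \<Rightarrow> (nat \<Rightarrow> real) \<Rightarrow> real^'d \<Rightarrow> real" where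
  "Phi n h Jh gphi w eta alph v =
     (1 / (2 * real n)) * (\<Sum>i=1..n. (norm (eta *\<^sub>R (Jh i w *v v) - alph i *\<^sub>R gphi i (h i w)))\<^sup>2)"

definition Psi ::
  "nat \<Rightarrow> (nat \<Rightarrow> real^'d \<Rightarrow> real^'c) \<Rightarrow> (nat \<Rightarrow> real^'d \<Rightarrow> real^'d^'c)
   \<Rightarrow> (nat \<Rightarrow> real^'c \<Rightarrow> real^'c) \<Rightarrow> real^'d \<Rightarrow> real \<Rightarrow> (nat \<Rightarrow> real) \<Rightarrow> real \<Rightarrow> real^'d \<Rightarrow> real" where
  "Psi n h Jh gphi w eta alph \<epsilon> v = Phi n h Jh gphi w eta alph v + (\<epsilon>\<^sup>2 / 2) * (norm v)\<^sup>2"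

end

theory Submission
  imports Defs
begin

text \<open>
  Track the potential \<open>\<Sum>\<^sub>i \<parallel>h(w\<^sup>(\<^sup>t\<^sup>);i) - h\<^sub>i\<^sup>*\<parallel>\<^sup>2\<close>. One step of Algorithm 1 moves
  \<open>h(w;i)\<close> to \<open>h(w;i) - \<alpha>\<^sub>i \<nabla>\<phi>\<^sub>i\<close> up to two errors: the residual
  \<open>\<eta>H\<^sub>iv - \<alpha>\<^sub>i\<nabla>\<phi>\<^sub>i\<close> of the regularised least-squares subproblem, small in mean
  square by Assumption C and minimality, and the second-order Taylor remainder of \<open>h\<close>,
  of size \<open>O(\<eta>\<^sup>2\<parallel>v\<parallel>\<^sup>2)\<close> by the Hessian bound. For the exact gradient step, convexity and
  \<open>L\<^sub>\<phi>\<close>-smoothness of \<open>\<phi>\<^sub>i\<close> give a decrease by \<open>2\<alpha>\<^sub>i(1-\<alpha>)(\<phi>\<^sub>i(h) - \<phi>\<^sub>i(h\<^sub>i\<^sup>*))\<close>.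
  Young's inequality with parameter \<open>\<epsilon>\<close> absorbs the errors at the price of a factor
  \<open>1+\<epsilon>\<close> per step, which the learning rates \<open>(1+\<epsilon>)\<^sup>t\<alpha>\<^sub>i\<^sup>(\<^sup>0\<^sup>)\<close> compensate exactly;
  telescoping over \<open>T = \<beta>/\<epsilon>\<close> steps, during which \<open>(1+\<epsilon>)\<^sup>t \<le> e\<^sup>\<beta>\<close>, gives the rate.
\<close>

lemma has_real_derivative_along_line:
  fixes f :: "'a::real_inner \<Rightarrow> real"
  assumes der: "\<And>z. (f has_derivative (\<lambda>u. g z \<bullet> u)) (at z)"
  shows "((\<lambda>s. f (x + s *\<^sub>R d)) has_real_derivative (g (x + s *\<^sub>R d) \<bullet> d)) (at s)"
proof -
  have "((\<lambda>s. x + s *\<^sub>R d) has_derivative (\<lambda>t. t *\<^sub>R d)) (at s)"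
    by (auto intro!: derivative_eq_intros)
  from diff_chain_at[OF this der]
  have "((\<lambda>s. f (x + s *\<^sub>R d)) has_derivative (\<lambda>t. t * (g (x + s *\<^sub>R d) \<bullet> d))) (at s)"
    by (simp add: o_def)
  moreover have "(\<lambda>t. t * (g (x + s *\<^sub>R d) \<bullet> d)) = (*) (g (x + s *\<^sub>R d) \<bullet> d)"
    by (auto simp: fun_eq_iff)
  ultimately show ?thesis
    by (simp add: has_field_derivative_def)
qed

lemma lipschitz_gradient_taylor_bound:
  fixes f :: "'a::real_inner \<Rightarrow> real"
  assumes der: "\<And>z. (f has_derivative (\<lambda>u. g z \<bullet> u)) (at z)"
    and lip: "\<And>y z. norm (g y - g z) \<le> K * norm (y - z)"
  shows "\<bar>f (x + d) - f x - g x \<bullet> d\<bar> \<le> K / 2 * (norm d)\<^sup>2"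
proof -
  have slope: "\<bar>g (x + s *\<^sub>R d) \<bullet> d - g x \<bullet> d\<bar> \<le> K * s * (norm d)\<^sup>2" if "0 \<le> s" for s
  proof -
    have "\<bar>g (x + s *\<^sub>R d) \<bullet> d - g x \<bullet> d\<bar> = \<bar>(g (x + s *\<^sub>R d) - g x) \<bullet> d\<bar>"
      by (simp add: inner_diff_left)
    also have "\<dots> \<le> norm (g (x + s *\<^sub>R d) - g x) * norm d"
      by (rule Cauchy_Schwarz_ineq2)
    also have "\<dots> \<le> K * norm (s *\<^sub>R d) * norm d"
      using lip[of "x + s *\<^sub>R d" x] by (simp add: mult_right_mono)
    also have "\<dots> = K * s * (norm d)\<^sup>2"
      using that by (simp add: power2_eq_square)
    finally show ?thesis .
  qed
  define p where "p s = f (x + s *\<^sub>R d) - s * (g x \<bullet> d) - K / 2 * s\<^sup>2 * (norm d)\<^sup>2" for s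
  define q where "q s = f (x + s *\<^sub>R d) - s * (g x \<bullet> d) + K / 2 * s\<^sup>2 * (norm d)\<^sup>2" for s
  have dp: "(p has_real_derivative (g (x + s *\<^sub>R d) \<bullet> d - g x \<bullet> d - K * s * (norm d)\<^sup>2)) (at s)" for s
    unfolding p_def
    by (rule derivative_eq_intros has_real_derivative_along_line[OF der] refl | simp)+
  have dq: "(q has_real_derivative (g (x + s *\<^sub>R d) \<bullet> d - g x \<bullet> d + K * s * (norm d)\<^sup>2)) (at s)" for s
    unfolding q_def
    by (rule derivative_eq_intros has_real_derivative_along_line[OF der] refl | simp)+
  have "p 1 \<le> p 0"
    by (rule DERIV_nonpos_imp_nonincreasing[of 0 1]) (use dp slope in force)+
  moreover have "q 0 \<le> q 1"
    by (rule DERIV_nonneg_imp_nondecreasing[of 0 1]) (use dq slope in force)+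
  ultimately show ?thesis
    unfolding p_def q_def abs_le_iff by simp
qed

lemma lipschitz_gradient_norm_sq_le:
  fixes f :: "'a::real_inner \<Rightarrow> real"
  assumes der: "\<And>z. (f has_derivative (\<lambda>u. g z \<bullet> u)) (at z)"
    and lip: "\<And>y z. norm (g y - g z) \<le> K * norm (y - z)"
    and K: "K > 0" and lower: "\<And>z. m \<le> f z"
  shows "(norm (g x))\<^sup>2 \<le> 2 * K * (f x - m)"
proof -
  \<comment> \<open>test the Taylor bound at the gradient step \<open>x - g x / K\<close>\<close>
  define d where "d = - (1 / K) *\<^sub>R g x"
  have "g x \<bullet> d = - ((norm (g x))\<^sup>2 / K)"
    by (simp add: d_def power2_norm_eq_inner)
  moreover have "K / 2 * (norm d)\<^sup>2 = (norm (g x))\<^sup>2 / (2 * K)"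
    using K by (simp add: d_def power_divide power2_eq_square field_simps)
  ultimately have "f (x + d) \<le> f x - (norm (g x))\<^sup>2 / (2 * K)"
    using lipschitz_gradient_taylor_bound[OF der lip, of x d] by (simp add: abs_le_iff)
  then have "(norm (g x))\<^sup>2 / (2 * K) \<le> f x - m"
    using lower[of "x + d"] by linarith
  then show ?thesis
    using K by (simp add: field_simps)
qed

lemma convex_gradient_inequality:
  fixes f :: "'a::real_inner \<Rightarrow> real"
  assumes der: "\<And>z. (f has_derivative (\<lambda>u. g z \<bullet> u)) (at z)"
    and cvx: "convex_on UNIV f"
  shows "g x \<bullet> (y - x) \<le> f y - f x"
proof -
  define p where "p = (\<lambda>s. f (x + s *\<^sub>R (y - x)))"
  have "convex_on UNIV p"
  proof (rule convex_onI)
    fix t a b :: real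
    assume t: "0 < t" "t < 1"
    have "x + ((1 - t) * a + t * b) *\<^sub>R (y - x)
        = (1 - t) *\<^sub>R (x + a *\<^sub>R (y - x)) + t *\<^sub>R (x + b *\<^sub>R (y - x))"
      by (simp add: algebra_simps)
    then show "p ((1 - t) *\<^sub>R a + t *\<^sub>R b) \<le> (1 - t) * p a + t * p b"
      unfolding p_def using convex_onD[OF cvx, of t] t by simp
  qed simp
  moreover have "(p has_real_derivative (g x \<bullet> (y - x))) (at 0)"
    using has_real_derivative_along_line[OF der, of x "y - x" 0] by (simp add: p_def)
  ultimately have "p 1 - p 0 \<ge> g x \<bullet> (y - x) * (1 - 0)"
    by (intro convex_on_imp_above_tangent) (auto simp: has_field_derivative_at_within)
  then show ?thesis
    by (simp add: p_def)
qed

lemma C2_hessian_bounded_taylor_bound: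
  fixes f :: "real^'d \<Rightarrow> real"
  assumes der: "\<And>x. (f has_derivative f' x) (at x)"
    and C2: "C2_hessian_bounded f G"
  shows "\<bar>f (x + d) - f x - f' x d\<bar> \<le> G / 2 * (norm d)\<^sup>2"
proof -
  obtain g :: "real^'d \<Rightarrow> real^'d" and H :: "real^'d \<Rightarrow> real^'d^'d" where
    g: "\<And>w. (f has_derivative (\<lambda>v. g w \<bullet> v)) (at w)" and
    H: "\<And>w. (g has_derivative (\<lambda>v. H w *v v)) (at w)" and
    H_bound: "\<And>w. onorm (\<lambda>v. H w *v v) \<le> G"
    using C2 unfolding C2_hessian_bounded_def by blast
  have "norm (g y - g z) \<le> G * norm (y - z)" for y z
    by (rule differentiable_bound[of UNIV]) (use H H_bound in auto)
  moreover have "f' x = (\<lambda>v. g x \<bullet> v)"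
    using der g by (rule has_derivative_unique)
  ultimately show ?thesis
    using lipschitz_gradient_taylor_bound[OF g] by simp
qed

lemma jacobian_remainder_norm_sq_le:
  fixes f :: "real^'d \<Rightarrow> real^'c" and J :: "real^'d \<Rightarrow> real^'d^'c"
  assumes der: "\<And>x. (f has_derivative (\<lambda>u. J x *v u)) (at x)"
    and C2: "\<And>j. C2_hessian_bounded (\<lambda>x. f x $ j) G"
  shows "(norm (f (x + d) - f x - J x *v d))\<^sup>2 \<le> real CARD('c) * (G / 2 * (norm d)\<^sup>2)\<^sup>2"
proof -
  let ?r = "f (x + d) - f x - J x *v d"
  have "(norm ?r)\<^sup>2 = (\<Sum>j\<in>UNIV. (?r $ j)\<^sup>2)"
    unfolding power2_norm_eq_inner inner_vec_def by (simp add: power2_eq_square)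
  also have "\<dots> \<le> of_nat (card (UNIV :: 'c set)) * (G / 2 * (norm d)\<^sup>2)\<^sup>2"
  proof (rule sum_bounded_above)
    fix j :: 'c
    have "((\<lambda>x. f x $ j) has_derivative (\<lambda>u. (J y *v u) $ j)) (at y)" for y
      using bounded_linear.has_derivative[OF bounded_linear_vec_nth der] .
    from C2_hessian_bounded_taylor_bound[OF this C2]
    have "\<bar>?r $ j\<bar> \<le> G / 2 * (norm d)\<^sup>2"
      by simp
    then show "(?r $ j)\<^sup>2 \<le> (G / 2 * (norm d)\<^sup>2)\<^sup>2"
      by (metis abs_ge_zero abs_le_square_iff abs_of_nonneg order_trans power2_abs)
  qed
  finally show ?thesis by simp
qed

lemma norm_add_sq_le_young:
  fixes x y :: "'a::real_inner"
  assumes "\<epsilon> > 0"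
  shows "(norm (x + y))\<^sup>2 \<le> (1 + \<epsilon>) * (norm x)\<^sup>2 + (1 + 1 / \<epsilon>) * (norm y)\<^sup>2"
proof -
  have "0 \<le> (norm (\<epsilon> *\<^sub>R x - y))\<^sup>2" by simp
  also have "\<dots> = \<epsilon>\<^sup>2 * (norm x)\<^sup>2 - 2 * \<epsilon> * (x \<bullet> y) + (norm y)\<^sup>2"
    unfolding power2_norm_eq_inner
    by (simp add: inner_diff_left inner_diff_right inner_commute power2_eq_square algebra_simps)
  finally have "2 * (x \<bullet> y) \<le> \<epsilon> * (norm x)\<^sup>2 + (norm y)\<^sup>2 / \<epsilon>"
    using assms by (simp add: field_simps power2_eq_square)
  moreover have "(norm (x + y))\<^sup>2 = (norm x)\<^sup>2 + 2 * (x \<bullet> y) + (norm y)\<^sup>2"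
    by (simp add: power2_norm_eq_inner inner_add_left inner_add_right inner_commute)
  ultimately show ?thesis
    by (simp add: algebra_simps)
qed

lemma norm_diff_sq_le:
  fixes x y :: "'a::real_inner"
  shows "(norm (x - y))\<^sup>2 \<le> 2 * (norm x)\<^sup>2 + 2 * (norm y)\<^sup>2"
proof -
  have "0 \<le> (norm (x + y))\<^sup>2" by simp
  then show ?thesis
    by (simp add: power2_norm_eq_inner inner_diff_left inner_diff_right
        inner_add_left inner_add_right inner_commute)
qed

lemma inexact_gradient_step_dist_sq:
  fixes z z' zstar g u r :: "'a::real_inner"
  assumes step: "z' = z - a *\<^sub>R g - u + r"
    and cvx: "g \<bullet> (zstar - z) \<le> fstar - f"
    and smooth: "(norm g)\<^sup>2 \<le> 2 * L * (f - fstar)"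
    and a: "0 \<le> a" "a * L \<le> \<alpha>" and opt: "fstar \<le> f" and \<epsilon>: "\<epsilon> > 0"
  shows "(norm (z' - zstar))\<^sup>2 \<le> (1 + \<epsilon>) * ((norm (z - zstar))\<^sup>2 - 2 * a * (1 - \<alpha>) * (f - fstar))
           + (1 + 1 / \<epsilon>) * (2 * (norm r)\<^sup>2 + 2 * (norm u)\<^sup>2)"
proof -
  define e where "e = z - zstar - a *\<^sub>R g"
  have exact: "(norm e)\<^sup>2 \<le> (norm (z - zstar))\<^sup>2 - 2 * a * (1 - \<alpha>) * (f - fstar)"
  proof -
    have "(norm e)\<^sup>2 = (norm (z - zstar))\<^sup>2 + 2 * a * (g \<bullet> (zstar - z)) + a\<^sup>2 * (norm g)\<^sup>2"
      unfolding e_def power2_norm_eq_inner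
      by (simp add: inner_diff_left inner_diff_right inner_commute power2_eq_square algebra_simps)
    moreover have "2 * a * (g \<bullet> (zstar - z)) \<le> 2 * a * (fstar - f)"
      using cvx a by (simp add: mult_left_mono)
    moreover have "a\<^sup>2 * (norm g)\<^sup>2 \<le> 2 * a * (a * L) * (f - fstar)"
      using mult_left_mono[OF smooth, of "a\<^sup>2"] by (simp add: power2_eq_square algebra_simps)
    moreover have "2 * a * (a * L) * (f - fstar) \<le> 2 * a * \<alpha> * (f - fstar)"
      using a opt by (intro mult_right_mono mult_left_mono) auto
    ultimately show ?thesis
      by (simp add: algebra_simps)
  qed
  have "(norm (z' - zstar))\<^sup>2 \<le> (1 + \<epsilon>) * (norm e)\<^sup>2 + (1 + 1 / \<epsilon>) * (norm (r - u))\<^sup>2"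
    using norm_add_sq_le_young[OF \<epsilon>, of e "r - u"] by (simp add: step e_def algebra_simps)
  also have "\<dots> \<le> (1 + \<epsilon>) * ((norm (z - zstar))\<^sup>2 - 2 * a * (1 - \<alpha>) * (f - fstar))
      + (1 + 1 / \<epsilon>) * (2 * (norm r)\<^sup>2 + 2 * (norm u)\<^sup>2)"
    using exact norm_diff_sq_le[of r u] \<epsilon> by (intro add_mono mult_left_mono) auto
  finally show ?thesis .
qed

lemma regularised_minimiser_bounds:
  fixes Q :: "'a::real_normed_vector \<Rightarrow> real"
  assumes Q_nonneg: "\<And>u. 0 \<le> Q u"
    and min: "Q v + \<epsilon>\<^sup>2 / 2 * (norm v)\<^sup>2 \<le> Q u + \<epsilon>\<^sup>2 / 2 * (norm u)\<^sup>2"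
    and u: "Q u \<le> \<epsilon>\<^sup>2" "(norm u)\<^sup>2 \<le> V" and \<epsilon>: "\<epsilon> > 0"
  shows "(norm v)\<^sup>2 \<le> 2 + V" and "Q v \<le> \<epsilon>\<^sup>2 * (1 + V / 2)"
proof -
  have "\<epsilon>\<^sup>2 / 2 * (norm u)\<^sup>2 \<le> \<epsilon>\<^sup>2 / 2 * V"
    using u(2) by (simp add: mult_left_mono)
  moreover have "\<epsilon>\<^sup>2 / 2 * (2 + V) = \<epsilon>\<^sup>2 + \<epsilon>\<^sup>2 / 2 * V" "\<epsilon>\<^sup>2 / 2 * (2 + V) = \<epsilon>\<^sup>2 * (1 + V / 2)"
    by (simp_all add: algebra_simps)
  ultimately have bound: "Q v + \<epsilon>\<^sup>2 / 2 * (norm v)\<^sup>2 \<le> \<epsilon>\<^sup>2 * (1 + V / 2)"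
    "Q v + \<epsilon>\<^sup>2 / 2 * (norm v)\<^sup>2 \<le> \<epsilon>\<^sup>2 / 2 * (2 + V)"
    using min u(1) by linarith+
  have "\<epsilon>\<^sup>2 / 2 * (norm v)\<^sup>2 \<le> \<epsilon>\<^sup>2 / 2 * (2 + V)"
    using bound(2) Q_nonneg[of v] by linarith
  then show "(norm v)\<^sup>2 \<le> 2 + V"
    using \<epsilon> by (simp add: mult_le_cancel_left)
  have "0 \<le> \<epsilon>\<^sup>2 / 2 * (norm v)\<^sup>2"
    by simp
  then show "Q v \<le> \<epsilon>\<^sup>2 * (1 + V / 2)"
    using bound(1) by linarith
qed

lemma weighted_recursion_telescope:
  fixes S Q :: "nat \<Rightarrow> real"
  assumes step: "\<And>t. t < T \<Longrightarrow> S (Suc t) \<le> (1 + \<epsilon>) * (S t - (1 + \<epsilon>) ^ t * Q t) + (1 + 1 / \<epsilon>) * M"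
    and \<epsilon>: "\<epsilon> > 0" and M: "M \<ge> 0"
  shows "m \<le> T \<Longrightarrow> (\<Sum>t<m. Q t) + S m / (1 + \<epsilon>) ^ m \<le> S 0 + m * M / \<epsilon>"
proof (induction m)
  case 0
  then show ?case by simp
next
  case (Suc t)
  then have t: "t < T" by simp
  \<comment> \<open>dividing the recursion by \<open>(1 + \<epsilon>)\<^sup>t\<^sup>+\<^sup>1\<close> makes it telescope\<close>
  define q where "q = (1 + \<epsilon>) ^ t"
  have q: "q \<ge> 1"
    using \<epsilon> by (simp add: q_def one_le_power)
  have "(1 + 1 / \<epsilon>) * M = (1 + \<epsilon>) * (M / \<epsilon>)"
    using \<epsilon> by (simp add: field_simps)
  then have "S (Suc t) / (1 + \<epsilon>) ^ Suc t \<le> (1 + \<epsilon>) * (S t - q * Q t + M / \<epsilon>) / ((1 + \<epsilon>) * q)"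
    using step[OF t] \<epsilon> q by (simp add: q_def divide_right_mono distrib_left)
  also have "\<dots> = S t / q - Q t + (M / \<epsilon>) / q"
    using \<epsilon> q by (simp add: add_divide_distrib diff_divide_distrib)
  also have "(M / \<epsilon>) / q \<le> (M / \<epsilon>) / 1"
    using \<epsilon> q M by (intro divide_left_mono) auto
  finally have "S (Suc t) / (1 + \<epsilon>) ^ Suc t \<le> S t / q - Q t + M / \<epsilon>"
    by simp
  with Suc.IH t show ?case
    by (simp add: q_def add_divide_distrib algebra_simps)
qed

locale composite_objective =
  fixes n :: nat
    and h :: "nat \<Rightarrow> real^'d \<Rightarrow> real^'c"
    and Jh :: "nat \<Rightarrow> real^'d \<Rightarrow> real^'d^'c"
    and \<phi> :: "nat \<Rightarrow> real^'c \<Rightarrow> real"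
    and gphi :: "nat \<Rightarrow> real^'c \<Rightarrow> real^'c"
    and hstar :: "nat \<Rightarrow> real^'c"
    and L G :: real
  assumes L_pos: "L > 0"
    and phi_convex: "\<And>i. i \<in> {1..n} \<Longrightarrow> convex_on UNIV (\<phi> i)"
    and phi_grad: "\<And>i z. i \<in> {1..n} \<Longrightarrow> (\<phi> i has_derivative (\<lambda>u. gphi i z \<bullet> u)) (at z)"
    and phi_smooth: "\<And>i y z. i \<in> {1..n} \<Longrightarrow> norm (gphi i y - gphi i z) \<le> L * norm (y - z)"
    and hstar_min: "\<And>i z. i \<in> {1..n} \<Longrightarrow> \<phi> i (hstar i) \<le> \<phi> i z"
    and G_nonneg: "G \<ge> 0"
    and h_jac: "\<And>i x. i \<in> {1..n} \<Longrightarrow> (h i has_derivative (\<lambda>u. Jh i x *v u)) (at x)"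
    and h_C2: "\<And>i j. i \<in> {1..n} \<Longrightarrow> C2_hessian_bounded (\<lambda>x. h i x $ j) G"
begin

definition dist_sq :: "real^'d \<Rightarrow> real" where
  "dist_sq w = (\<Sum>i=1..n. (norm (h i w - hstar i))\<^sup>2)"

definition objective :: "real^'d \<Rightarrow> real" where
  "objective x = (1 / real n) * (\<Sum>i=1..n. \<phi> i (h i x))"

definition gap :: "real^'d \<Rightarrow> real" where
  "gap w = (\<Sum>i=1..n. \<phi> i (h i w) - \<phi> i (hstar i))"

lemma dist_sq_nonneg: "0 \<le> dist_sq w"
  by (simp add: dist_sq_def sum_nonneg)

lemma objective_minus_Inf_le_gap: "objective x - (INF y. objective y) \<le> gap x / real n"
proof -
  define Fstar where "Fstar = (1 / real n) * (\<Sum>i=1..n. \<phi> i (hstar i))"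
  have "Fstar \<le> objective y" for y
    unfolding Fstar_def objective_def using hstar_min by (intro mult_left_mono sum_mono) auto
  then have "Fstar \<le> (INF y. objective y)"
    by (intro cINF_greatest) auto
  moreover have "objective x - Fstar = gap x / real n"
    by (simp add: Fstar_def objective_def gap_def sum_subtractf diff_divide_distrib)
  ultimately show ?thesis
    by linarith
qed

lemma average_objective_excess_le:
  "(1 / real T) * (\<Sum>t<T. objective (w t) - (INF x. objective x)) \<le> (\<Sum>t<T. gap (w t)) / (real n * real T)"
proof -
  have "(\<Sum>t<T. objective (w t) - (INF x. objective x)) \<le> (\<Sum>t<T. gap (w t) / real n)"
    by (intro sum_mono objective_minus_Inf_le_gap)
  then show ?thesis
    by (simp add: mult_left_mono divide_le_eq sum_divide_distrib[symmetric] mult.commute)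
qed

lemma dist_sq_step:
  assumes \<epsilon>: "\<epsilon> > 0" and a: "0 \<le> a" "a * L \<le> \<alpha>"
    and min: "Psi n h Jh gphi w \<eta> (\<lambda>_. a) \<epsilon> v \<le> Psi n h Jh gphi w \<eta> (\<lambda>_. a) \<epsilon> u"
    and u: "(norm u)\<^sup>2 \<le> V" "Phi n h Jh gphi w \<eta> (\<lambda>_. a) u \<le> \<epsilon>\<^sup>2"
  shows "dist_sq (w - \<eta> *\<^sub>R v) \<le> (1 + \<epsilon>) * (dist_sq w - 2 * a * (1 - \<alpha>) * gap w)
           + (1 + 1 / \<epsilon>) * (real n * (real CARD('c) * (G * \<eta>\<^sup>2 * (2 + V))\<^sup>2 / 2 + \<epsilon>\<^sup>2 * (4 + 2 * V)))"
proof -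
  let ?Phi = "Phi n h Jh gphi w \<eta> (\<lambda>_. a)"
  let ?c = "real CARD('c)"
  have "?Phi v + \<epsilon>\<^sup>2 / 2 * (norm v)\<^sup>2 \<le> ?Phi u + \<epsilon>\<^sup>2 / 2 * (norm u)\<^sup>2"
    using min by (simp only: Psi_def)
  moreover have "0 \<le> ?Phi x" for x
    by (simp add: Phi_def sum_nonneg)
  ultimately have v: "(norm v)\<^sup>2 \<le> 2 + V" "?Phi v \<le> \<epsilon>\<^sup>2 * (1 + V / 2)"
    using regularised_minimiser_bounds[of ?Phi v \<epsilon> u V] u \<epsilon> by blast+
  define d where "d = - \<eta> *\<^sub>R v"
  have step: "w - \<eta> *\<^sub>R v = w + d"
    by (simp add: d_def)
  define U where "U i = \<eta> *\<^sub>R (Jh i w *v v) - a *\<^sub>R gphi i (h i w)" for i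
  define R where "R i = h i (w + d) - h i w - Jh i w *v d" for i
  have per_index: "(norm (h i (w + d) - hstar i))\<^sup>2
      \<le> (1 + \<epsilon>) * ((norm (h i w - hstar i))\<^sup>2 - 2 * a * (1 - \<alpha>) * (\<phi> i (h i w) - \<phi> i (hstar i)))
        + (1 + 1 / \<epsilon>) * (2 * (norm (R i))\<^sup>2 + 2 * (norm (U i))\<^sup>2)"
    if i: "i \<in> {1..n}" for i
  proof (rule inexact_gradient_step_dist_sq)
    have "Jh i w *v d = - \<eta> *\<^sub>R (Jh i w *v v)"
      unfolding d_def by (rule matrix_vector_mult_scaleR)
    then show "h i (w + d) = h i w - a *\<^sub>R gphi i (h i w) - U i + R i"
      by (simp add: U_def R_def algebra_simps)
    show "gphi i (h i w) \<bullet> (hstar i - h i w) \<le> \<phi> i (hstar i) - \<phi> i (h i w)"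
      by (rule convex_gradient_inequality[OF phi_grad[OF i] phi_convex[OF i]])
    show "(norm (gphi i (h i w)))\<^sup>2 \<le> 2 * L * (\<phi> i (h i w) - \<phi> i (hstar i))"
      by (rule lipschitz_gradient_norm_sq_le[OF phi_grad[OF i] phi_smooth[OF i] L_pos hstar_min[OF i]])
  qed (use a hstar_min[OF i] \<epsilon> in auto)
  have R_bound: "(norm (R i))\<^sup>2 \<le> ?c * (G * \<eta>\<^sup>2 * (2 + V))\<^sup>2 / 4" if i: "i \<in> {1..n}" for i
  proof -
    have "(norm d)\<^sup>2 \<le> \<eta>\<^sup>2 * (2 + V)"
      using v(1) by (simp add: d_def power_mult_distrib mult_left_mono)
    have "(norm (R i))\<^sup>2 \<le> ?c * (G / 2 * (norm d)\<^sup>2)\<^sup>2"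
      unfolding R_def by (rule jacobian_remainder_norm_sq_le[OF h_jac[OF i] h_C2[OF i]])
    also have "\<dots> \<le> ?c * (G / 2 * (\<eta>\<^sup>2 * (2 + V)))\<^sup>2"
      using \<open>(norm d)\<^sup>2 \<le> \<eta>\<^sup>2 * (2 + V)\<close> G_nonneg by (intro mult_left_mono power_mono) auto
    also have "\<dots> = ?c * (G * \<eta>\<^sup>2 * (2 + V))\<^sup>2 / 4"
      by (simp add: power_mult_distrib power_divide)
    finally show ?thesis .
  qed
  have U_sum: "(\<Sum>i=1..n. (norm (U i))\<^sup>2) = real n * (2 * ?Phi v)"
    by (simp add: Phi_def U_def)
  have "dist_sq (w - \<eta> *\<^sub>R v) \<le> (\<Sum>i=1..n. (1 + \<epsilon>) * ((norm (h i w - hstar i))\<^sup>2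
        - 2 * a * (1 - \<alpha>) * (\<phi> i (h i w) - \<phi> i (hstar i)))
        + (1 + 1 / \<epsilon>) * (2 * (norm (R i))\<^sup>2 + 2 * (norm (U i))\<^sup>2))"
    unfolding dist_sq_def step by (rule sum_mono[OF per_index])
  also have "\<dots> = (1 + \<epsilon>) * (dist_sq w - 2 * a * (1 - \<alpha>) * gap w)
      + (1 + 1 / \<epsilon>) * (\<Sum>i=1..n. 2 * (norm (R i))\<^sup>2 + 2 * (norm (U i))\<^sup>2)"
    unfolding dist_sq_def gap_def
    by (simp only: sum.distrib sum_subtractf sum_distrib_left[symmetric])
  also have "\<dots> \<le> (1 + \<epsilon>) * (dist_sq w - 2 * a * (1 - \<alpha>) * gap w)
      + (1 + 1 / \<epsilon>) * (real n * (?c * (G * \<eta>\<^sup>2 * (2 + V))\<^sup>2 / 2 + \<epsilon>\<^sup>2 * (4 + 2 * V)))"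
  proof (intro add_left_mono mult_left_mono)
    have "(\<Sum>i=1..n. (norm (R i))\<^sup>2) \<le> real n * (?c * (G * \<eta>\<^sup>2 * (2 + V))\<^sup>2 / 4)"
      using sum_bounded_above[of "{1..n}" "\<lambda>i. (norm (R i))\<^sup>2", OF R_bound] by simp
    moreover have "2 * ?Phi v \<le> \<epsilon>\<^sup>2 * (2 + V)"
      using v(2) by (simp add: algebra_simps)
    then have "(\<Sum>i=1..n. (norm (U i))\<^sup>2) \<le> real n * (\<epsilon>\<^sup>2 * (2 + V))"
      using U_sum mult_left_mono[of "2 * ?Phi v" _ "real n"] by simp
    moreover have "real n * (?c * (G * \<eta>\<^sup>2 * (2 + V))\<^sup>2 / 2 + \<epsilon>\<^sup>2 * (4 + 2 * V))
        = 2 * (real n * (?c * (G * \<eta>\<^sup>2 * (2 + V))\<^sup>2 / 4)) + 2 * (real n * (\<epsilon>\<^sup>2 * (2 + V)))"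
      by (simp add: algebra_simps)
    ultimately show "(\<Sum>i=1..n. 2 * (norm (R i))\<^sup>2 + 2 * (norm (U i))\<^sup>2)
        \<le> real n * (?c * (G * \<eta>\<^sup>2 * (2 + V))\<^sup>2 / 2 + \<epsilon>\<^sup>2 * (4 + 2 * V))"
      unfolding sum.distrib sum_distrib_left[symmetric] by linarith
  qed (use \<epsilon> in simp)
  finally show ?thesis .
qed

lemma iterates_gap_sum_le:
  fixes w v :: "nat \<Rightarrow> real^'d"
  assumes \<epsilon>: "\<epsilon> > 0" and a\<^sub>0: "0 \<le> a\<^sub>0" and rates: "\<And>t. t < T \<Longrightarrow> (1 + \<epsilon>) ^ t * a\<^sub>0 * L \<le> \<alpha>"
    and min: "\<And>t u. t < T \<Longrightarrow> Psi n h Jh gphi (w t) \<eta> (\<lambda>_. (1 + \<epsilon>) ^ t * a\<^sub>0) \<epsilon> (v t)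
                                \<le> Psi n h Jh gphi (w t) \<eta> (\<lambda>_. (1 + \<epsilon>) ^ t * a\<^sub>0) \<epsilon> u"
    and step: "\<And>t. t < T \<Longrightarrow> w (Suc t) = w t - \<eta> *\<^sub>R v t"
    and V: "V \<ge> 0"
    and C: "\<And>t. t < T \<Longrightarrow> \<exists>u. (norm u)\<^sup>2 \<le> V \<and> Phi n h Jh gphi (w t) \<eta> (\<lambda>_. (1 + \<epsilon>) ^ t * a\<^sub>0) u \<le> \<epsilon>\<^sup>2"
  shows "2 * a\<^sub>0 * (1 - \<alpha>) * (\<Sum>t<T. gap (w t)) \<le> dist_sq (w 0)
           + real T * real n * (real CARD('c) * (G * \<eta>\<^sup>2 * (2 + V))\<^sup>2 / 2 + \<epsilon>\<^sup>2 * (4 + 2 * V)) / \<epsilon>"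
proof -
  define M where "M = real n * (real CARD('c) * (G * \<eta>\<^sup>2 * (2 + V))\<^sup>2 / 2 + \<epsilon>\<^sup>2 * (4 + 2 * V))"
  have "dist_sq (w (Suc t))
      \<le> (1 + \<epsilon>) * (dist_sq (w t) - (1 + \<epsilon>) ^ t * (2 * a\<^sub>0 * (1 - \<alpha>) * gap (w t))) + (1 + 1 / \<epsilon>) * M"
    if t: "t < T" for t
  proof -
    obtain u where u: "(norm u)\<^sup>2 \<le> V" "Phi n h Jh gphi (w t) \<eta> (\<lambda>_. (1 + \<epsilon>) ^ t * a\<^sub>0) u \<le> \<epsilon>\<^sup>2"
      using C[OF t] by blast
    have "0 \<le> (1 + \<epsilon>) ^ t * a\<^sub>0"
      using a\<^sub>0 \<epsilon> by simp
    from dist_sq_step[OF \<epsilon> this rates[OF t] min[OF t] u]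
    show ?thesis
      unfolding step[OF t] M_def by (simp add: algebra_simps)
  qed
  then have "(\<Sum>t<T. 2 * a\<^sub>0 * (1 - \<alpha>) * gap (w t)) + dist_sq (w T) / (1 + \<epsilon>) ^ T \<le> dist_sq (w 0) + T * M / \<epsilon>"
    by (rule weighted_recursion_telescope) (use \<epsilon> V in \<open>auto simp: M_def\<close>)
  moreover have "0 \<le> dist_sq (w T) / (1 + \<epsilon>) ^ T"
    using dist_sq_nonneg \<epsilon> by simp
  ultimately show ?thesis
    by (simp add: M_def sum_distrib_left mult.assoc)
qed

end

lemma growing_rate_le:
  assumes \<epsilon>: "\<epsilon> > 0" and L: "L > 0" and \<alpha>: "\<alpha> \<ge> 0" and t: "real t \<le> \<beta> / \<epsilon>"
  shows "(1 + \<epsilon>) ^ t * (\<alpha> / (exp \<beta> * L)) * L \<le> \<alpha>"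
proof -
  have "(1 + \<epsilon>) ^ t \<le> exp \<epsilon> ^ t"
    using \<epsilon> by (intro power_mono) (auto simp: add.commute exp_ge_add_one_self)
  also have "\<dots> = exp (real t * \<epsilon>)"
    by (simp add: exp_of_nat_mult)
  also have "\<dots> \<le> exp \<beta>"
    using t \<epsilon> by (simp add: pos_le_divide_eq[symmetric])
  finally have "(1 + \<epsilon>) ^ t * \<alpha> \<le> exp \<beta> * \<alpha>"
    using \<alpha> by (rule mult_right_mono)
  then show ?thesis
    using L by (simp add: divide_le_eq mult.commute)
qed

lemma convergence_rate_arithmetic:
  fixes P S0 K B E \<alpha> \<beta> \<epsilon> N T :: real
  assumes main: "2 * (\<alpha> / E) * (1 - \<alpha>) * P \<le> S0 + T * N * \<epsilon> * K"
    and T: "T = \<beta> / \<epsilon>" and pos: "\<epsilon> > 0" "\<beta> > 0" "E > 0" "N > 0"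
    and \<alpha>: "0 < \<alpha>" "\<alpha> < 1 / 3" and S0: "S0 \<ge> 0" and K: "0 \<le> K" "2 * K \<le> B"
  shows "P / (N * T) \<le> E * (1 + \<epsilon>) / (2 * (1 - 3 * \<alpha>) * \<alpha> * \<beta>) * ((1 / N) * S0) * \<epsilon>
                       + E * (3 * \<epsilon> + 2) / (8 * \<alpha> * (1 - 3 * \<alpha>)) * B * \<epsilon>"
proof -
  define c\<^sub>1 where "c\<^sub>1 = E * \<epsilon> / (2 * \<alpha> * \<beta>) * (S0 / N)"
  define c\<^sub>2 where "c\<^sub>2 = E * \<epsilon> / \<alpha>"
  define b where "b = 1 - \<alpha>"
  have b: "b > 0"
    using \<alpha> by (simp add: b_def)
  have c: "0 \<le> c\<^sub>1" "0 \<le> c\<^sub>2"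
    using pos \<alpha> S0 by (simp_all add: c\<^sub>1_def c\<^sub>2_def)
  have "0 < 2 * (\<alpha> / E) * b"
    using pos \<alpha> b by simp
  then have "P \<le> (S0 + T * N * \<epsilon> * K) / (2 * (\<alpha> / E) * b)"
    by (metis main b_def mult.commute pos_le_divide_eq)
  then have "P / (N * T) \<le> (S0 + T * N * \<epsilon> * K) / (2 * (\<alpha> / E) * b) / (N * T)"
    using pos T by (intro divide_right_mono) auto
  also have "\<dots> = c\<^sub>1 * (1 / b) + c\<^sub>2 * (K / (2 * b))"
    using pos \<alpha> b by (simp add: T c\<^sub>1_def c\<^sub>2_def field_simps)
  also have "\<dots> \<le> c\<^sub>1 * ((1 + \<epsilon>) / (1 - 3 * \<alpha>)) + c\<^sub>2 * ((3 * \<epsilon> + 2) * B / (8 * (1 - 3 * \<alpha>)))"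
  proof (intro add_mono mult_left_mono c)
    show "1 / b \<le> (1 + \<epsilon>) / (1 - 3 * \<alpha>)"
      using pos \<alpha> by (intro frac_le) (auto simp: b_def)
    have "K / (2 * b) = (2 * K) / (4 * b)"
      by simp
    also have "\<dots> \<le> B / (4 * (1 - 3 * \<alpha>))"
      using K \<alpha> by (intro frac_le) (auto simp: b_def)
    also have "\<dots> = (2 * B) / (2 * (4 * (1 - 3 * \<alpha>)))"
      by (rule mult_divide_mult_cancel_left[symmetric]) simp
    also have "\<dots> \<le> (3 * \<epsilon> + 2) * B / (2 * (4 * (1 - 3 * \<alpha>)))"
      using K pos \<alpha> by (intro divide_right_mono mult_right_mono) auto
    also have "\<dots> = (3 * \<epsilon> + 2) * B / (8 * (1 - 3 * \<alpha>))"
      by simp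
    finally show "K / (2 * b) \<le> (3 * \<epsilon> + 2) * B / (8 * (1 - 3 * \<alpha>))" .
  qed
  also have "\<dots> = E * (1 + \<epsilon>) / (2 * (1 - 3 * \<alpha>) * \<alpha> * \<beta>) * ((1 / N) * S0) * \<epsilon>
                 + E * (3 * \<epsilon> + 2) / (8 * \<alpha> * (1 - 3 * \<alpha>)) * B * \<epsilon>"
  proof -
    have eq: "c\<^sub>1 * ((1 + \<epsilon>) / r) + c\<^sub>2 * ((3 * \<epsilon> + 2) * B / (8 * r))
        = E * (1 + \<epsilon>) / (2 * r * \<alpha> * \<beta>) * ((1 / N) * S0) * \<epsilon>
          + E * (3 * \<epsilon> + 2) / (8 * \<alpha> * r) * B * \<epsilon>" if "r > 0" for r
      using that pos \<alpha> by (simp add: c\<^sub>1_def c\<^sub>2_def field_simps)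
    show ?thesis
      by (rule eq) (use \<alpha> in simp)
  qed
  finally show ?thesis .
qed

theorem theorem1:
  fixes n :: nat
    and h :: "nat \<Rightarrow> real^'d \<Rightarrow> real^'c"
    and Jh :: "nat \<Rightarrow> real^'d \<Rightarrow> real^'d^'c"
    and \<phi> :: "nat \<Rightarrow> real^'c \<Rightarrow> real"
    and gphi :: "nat \<Rightarrow> real^'c \<Rightarrow> real^'c"
    and hstar :: "nat \<Rightarrow> real^'c"
    and F :: "real^'d \<Rightarrow> real"
    and L\<phi> G V \<epsilon> \<beta> D \<alpha> :: real
    and T :: nat
    and w v :: "nat \<Rightarrow> real^'d"
    and \<eta> :: "nat \<Rightarrow> real"
    and alph :: "nat \<Rightarrow> nat \<Rightarrow> real"
  assumes n_pos: "n \<ge> 1"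
    and F_def: "\<And>x. F x = (1 / real n) * (\<Sum>i=1..n. \<phi> i (h i x))"
    \<comment> \<open>Assumption A\<close>
    and L_pos: "L\<phi> > 0"
    and phi_convex: "\<And>i. i \<in> {1..n} \<Longrightarrow> convex_on UNIV (\<phi> i)"
    and phi_bdd: "\<And>i. i \<in> {1..n} \<Longrightarrow> bdd_below (range (\<phi> i))"
    and phi_grad: "\<And>i z. i \<in> {1..n} \<Longrightarrow> (\<phi> i has_derivative (\<lambda>u. gphi i z \<bullet> u)) (at z)"
    and phi_smooth: "\<And>i z1 z2. i \<in> {1..n} \<Longrightarrow>
                       norm (gphi i z1 - gphi i z2) \<le> L\<phi> * norm (z1 - z2)"
    and hstar_min: "\<And>i z. i \<in> {1..n} \<Longrightarrow> \<phi> i (hstar i) \<le> \<phi> i z"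
    \<comment> \<open>Assumption B\<close>
    and G_pos: "G > 0"
    and h_jac: "\<And>i x. i \<in> {1..n} \<Longrightarrow> (h i has_derivative (\<lambda>u. Jh i x *v u)) (at x)"
    and h_C2: "\<And>i j. i \<in> {1..n} \<Longrightarrow> C2_hessian_bounded (\<lambda>x. h i x $ j) G"
    and eps_pos: "\<epsilon> > 0"
    and beta_pos: "\<beta> > 0"
    and T_def: "real T = \<beta> / \<epsilon>"
    and D_pos: "D > 0"
    and eta_def: "\<And>t. \<eta> t = D * sqrt \<epsilon>"
    and alpha_range: "0 < \<alpha>" "\<alpha> < 1/3"
    and alph_def: "\<And>t i. alph t i = (1 + \<epsilon>) ^ t * (\<alpha> / (exp \<beta> * L\<phi>))"
    \<comment> \<open>Algorithm 1: v t is the (unique) minimiser of Psi^(t), w (t+1) = w t - eta v t\<close>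
    and v_min: "\<And>t u. t < T \<Longrightarrow>
        Psi n h Jh gphi (w t) (\<eta> t) (alph t) \<epsilon> (v t) \<le> Psi n h Jh gphi (w t) (\<eta> t) (alph t) \<epsilon> u"
    and w_step: "\<And>t. t < T \<Longrightarrow> w (Suc t) = w t - \<eta> t *\<^sub>R v t"
    \<comment> \<open>Assumption C\<close>
    and V_pos: "V > 0"
    and assmC: "\<And>t. t < T \<Longrightarrow> \<exists>vh. (norm vh)\<^sup>2 \<le> V \<and> Phi n h Jh gphi (w t) (\<eta> t) (alph t) vh \<le> \<epsilon>\<^sup>2"
  shows "(1 / real T) * (\<Sum>t<T. F (w t) - (INF x. F x))
      \<le> exp \<beta> * L\<phi> * (1 + \<epsilon>) / (2 * (1 - 3 * \<alpha>) * \<alpha> * \<beta>)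
           * ((1 / real n) * (\<Sum>i=1..n. (norm (h i (w 0) - hstar i))\<^sup>2)) * \<epsilon>
       + exp \<beta> * L\<phi> * (3 * \<epsilon> + 2) / (8 * \<alpha> * (1 - 3 * \<alpha>))
           * (real CARD('c) * (4 + (V + 2) * G * D\<^sup>2)\<^sup>2 + 8 + 4 * V) * \<epsilon>"
proof -
  interpret composite_objective n h Jh \<phi> gphi hstar L\<phi> G
    using L_pos phi_convex phi_grad phi_smooth hstar_min G_pos h_jac h_C2 by unfold_locales auto
  define E where "E = exp \<beta> * L\<phi>"
  define K where "K = real CARD('c) * ((V + 2) * G * D\<^sup>2)\<^sup>2 / 2 + 4 + 2 * V"
  have E: "E > 0"
    using L_pos by (simp add: E_def)
  have rates: "(1 + \<epsilon>) ^ t * (\<alpha> / E) * L\<phi> \<le> \<alpha>" if "t < T" for t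
    using growing_rate_le[OF eps_pos L_pos, of \<alpha> t \<beta>] that alpha_range T_def by (simp add: E_def)
  have "alph t = (\<lambda>_. (1 + \<epsilon>) ^ t * (\<alpha> / E))" for t
    by (simp add: fun_eq_iff alph_def E_def)
  then have "2 * (\<alpha> / E) * (1 - \<alpha>) * (\<Sum>t<T. gap (w t)) \<le> dist_sq (w 0) + real T * real n
      * (real CARD('c) * (G * (D * sqrt \<epsilon>)\<^sup>2 * (2 + V))\<^sup>2 / 2 + \<epsilon>\<^sup>2 * (4 + 2 * V)) / \<epsilon>"
    using v_min w_step assmC E alpha_range V_pos
    by (intro iterates_gap_sum_le[where w = w and v = v, OF eps_pos _ rates]) (simp_all add: eta_def)
  moreover have remainder_scale: "G * (D * sqrt \<epsilon>)\<^sup>2 * (2 + V) = \<epsilon> * ((V + 2) * G * D\<^sup>2)"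
    using eps_pos by (simp add: power_mult_distrib algebra_simps)
  have "real CARD('c) * (G * (D * sqrt \<epsilon>)\<^sup>2 * (2 + V))\<^sup>2 / 2 + \<epsilon>\<^sup>2 * (4 + 2 * V) = \<epsilon> * (\<epsilon> * K)"
    unfolding remainder_scale K_def by (simp add: power_mult_distrib power2_eq_square algebra_simps)
  ultimately have main: "2 * (\<alpha> / E) * (1 - \<alpha>) * (\<Sum>t<T. gap (w t))
      \<le> dist_sq (w 0) + real T * real n * \<epsilon> * K"
    using eps_pos by simp
  have "F = objective"
    using F_def by (simp add: fun_eq_iff objective_def)
  then have "(1 / real T) * (\<Sum>t<T. F (w t) - (INF x. F x)) \<le> (\<Sum>t<T. gap (w t)) / (real n * real T)"
    using average_objective_excess_le by simp
  also have "\<dots> \<le> exp \<beta> * L\<phi> * (1 + \<epsilon>) / (2 * (1 - 3 * \<alpha>) * \<alpha> * \<beta>)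
           * ((1 / real n) * (\<Sum>i=1..n. (norm (h i (w 0) - hstar i))\<^sup>2)) * \<epsilon>
       + exp \<beta> * L\<phi> * (3 * \<epsilon> + 2) / (8 * \<alpha> * (1 - 3 * \<alpha>))
           * (real CARD('c) * (4 + (V + 2) * G * D\<^sup>2)\<^sup>2 + 8 + 4 * V) * \<epsilon>"
    unfolding E_def[symmetric] dist_sq_def[symmetric]
    by (rule convergence_rate_arithmetic[OF main T_def eps_pos beta_pos E _ alpha_range dist_sq_nonneg])
      (use n_pos V_pos G_pos in \<open>auto simp: K_def power_mono\<close>)
  finally show ?thesis .
qed

end
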